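(* Let $\mathcal I=\mathbb R^d$, let $\mathcal G$ be a compact Abelian group with normalized Haar measure $dg$ acting on $\mathcal I$ by a unitary representation, and let $\mathcal G_0\subset\mathcal G$ be measurable with $V=\int_{\mathcal G_0}dg>0$. For $I\in\mathcal I$ and $\bar g\in\mathcal G$ let $Z_{I,\bar g}:\bar g\mathcal G_0\to\mathcal I$, $Z_{I,\bar g}(g)=gI$, and let $\rho_{I,\bar g}(A)=\frac1V\int_{Z_{I,\bar g}^{-1}(A)}dg$ for measurable $A\subset\mathcal I$. Define $\bar P(I):\mathcal G\to\mathcal P(\mathcal I)$ by $\bar P(I)(g)=\rho_{I,g}$, and let $\mathcal G$ act on such maps by $(\tilde g\bar P(I))(g)=\bar P(I)(\tilde gg)$. Then for all $I,I'\in\mathcal I$: if $I\sim I'$, there exists $\tilde g\in\mathcal G$ such that $\bar P(I')=\tilde g\bar P(I)$. Equivalently, if $I'=\tilde gI$ then $\bar P(I')(g)=\bar P(I)(g\tilde g)$ for all $g\in\mathcal G$ (i.e. $\bar P$ is covariant).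
   Context: $\bar g\mathcal G_0=\{\bar g g': g'\in\mathcal G_0\}$. $\mathcal P(\mathcal I)$ is the set of Borel probability measures on $\mathcal I$. $I\sim I'$ means there exists $g\in\mathcal G$ with $gI=I'$. *)

theory Defs
  imports "HOL-Analysis.Analysis" "HOL-Probability.Probability"
begin

definition haar_prob :: "('g::{topological_ab_group_add,t2_space}) measure \<Rightarrow> bool" where
  "haar_prob \<mu> \<longleftrightarrow> prob_space \<mu> \<and> sets \<mu> = sets borel \<and>
     (\<forall>g A. A \<in> sets \<mu> \<longrightarrow> emeasure \<mu> ((\<lambda>x. g + x) ` A) = emeasure \<mu> A)"

definition unitary_rep :: "('g::{topological_ab_group_add} \<Rightarrow> 'v::real_inner \<Rightarrow> 'v) \<Rightarrow> bool" where
  "unitary_rep \<pi> \<longleftrightarrow> (\<forall>g. orthogonal_transformation (\<pi> g)) \<and> \<pi> 0 = id \<and>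
     (\<forall>g h. \<pi> (g + h) = \<pi> g \<circ> \<pi> h) \<and> (\<forall>x. continuous_on UNIV (\<lambda>g. \<pi> g x))"

definition orbit_equiv :: "('g \<Rightarrow> 'v \<Rightarrow> 'v) \<Rightarrow> 'v \<Rightarrow> 'v \<Rightarrow> bool" where
  "orbit_equiv \<pi> I I' \<longleftrightarrow> (\<exists>g. \<pi> g I = I')"

definition rho :: "'g::plus measure \<Rightarrow> 'g set \<Rightarrow> ('g \<Rightarrow> 'v::topological_space \<Rightarrow> 'v) \<Rightarrow> 'v \<Rightarrow> 'g \<Rightarrow> 'v measure" where
  "rho \<mu> G0 \<pi> I gbar = measure_of UNIV (sets borel)
     (\<lambda>A. ennreal (measure \<mu> {g \<in> (\<lambda>x. gbar + x) ` G0. \<pi> g I \<in> A} / measure \<mu> G0))"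

definition Pbar :: "'g::plus measure \<Rightarrow> 'g set \<Rightarrow> ('g \<Rightarrow> 'v::topological_space \<Rightarrow> 'v) \<Rightarrow> 'v \<Rightarrow> 'g \<Rightarrow> 'v measure" where
  "Pbar \<mu> G0 \<pi> I = (\<lambda>g. rho \<mu> G0 \<pi> I g)"

definition act_map :: "'g::plus \<Rightarrow> ('g \<Rightarrow> 'm) \<Rightarrow> ('g \<Rightarrow> 'm)" where
  "act_map gt P = (\<lambda>g. P (gt + g))"

end

theory Submission
  imports Defs
begin

text \<open>Translating the group by \<open>gt\<close> moves the window \<open>g G0\<close> to \<open>(g + gt) G0\<close> and, because
  \<open>\<pi>\<close> is a homomorphism, turns the orbit map of \<open>\<pi> gt I\<close> into that of \<open>I\<close>; so the preimage
  defining \<open>\<rho>\<^bsub>\<pi> gt I, g\<^esub>\<close> is a translate of the one defining \<open>\<rho>\<^bsub>I, g + gt\<^esub>\<close>, and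
  translation invariance of Haar measure makes the two measures equal.\<close>

lemma translation_in_borel:
  fixes c :: "'g::{topological_ab_group_add,t2_space}"
  assumes "A \<in> sets borel"
  shows "(\<lambda>x. c + x) ` A \<in> sets borel"
proof -
  have preimage: "(\<lambda>x. c + x) ` A = (\<lambda>x. x - c) -` A \<inter> space borel"
    by (auto simp: image_iff algebra_simps intro!: bexI[where x="_ - c"])
  have "(\<lambda>x. x - c) \<in> borel_measurable borel"
    by (intro borel_measurable_continuous_onI continuous_intros)
  then show ?thesis
    unfolding preimage using assms by (rule measurable_sets)
qed

lemma haar_prob_measure_translation:
  fixes \<mu> :: "('g::{topological_ab_group_add,t2_space}) measure"
  assumes "haar_prob \<mu>"
  shows "measure \<mu> ((\<lambda>x. c + x) ` S) = measure \<mu> S"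
proof (cases "S \<in> sets \<mu>")
  case True
  then show ?thesis
    using assms unfolding haar_prob_def measure_def by simp
next
  case False
  have sets_eq: "sets \<mu> = sets borel"
    using assms unfolding haar_prob_def by simp
  have "(\<lambda>x. - c + x) ` ((\<lambda>x. c + x) ` S) = S"
    by (auto simp: image_image)
  then have "(\<lambda>x. c + x) ` S \<notin> sets \<mu>"
    using False translation_in_borel[of _ "- c"] sets_eq by metis
  then show ?thesis
    using False by (simp add: measure_notin_sets)
qed

lemma translation_image_Collect:
  fixes c g :: "'g::semigroup_add"
  shows "(\<lambda>x. c + x) ` {h \<in> (\<lambda>x. g + x) ` S. P (c + h)} = {h \<in> (\<lambda>x. c + g + x) ` S. P h}"
  by (auto simp: image_iff add.assoc)

lemma rho_translate_point:
  fixes \<mu> :: "('g::{topological_ab_group_add,t2_space}) measure"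
    and \<pi> :: "'g \<Rightarrow> 'v::topological_space \<Rightarrow> 'v"
  assumes "haar_prob \<mu>"
    and hom: "\<And>g h. \<pi> (g + h) = \<pi> g \<circ> \<pi> h"
  shows "rho \<mu> G0 \<pi> (\<pi> gt I) g = rho \<mu> G0 \<pi> I (g + gt)"
proof -
  have "{h \<in> (\<lambda>x. g + gt + x) ` G0. \<pi> h I \<in> A}
      = (\<lambda>x. gt + x) ` {h \<in> (\<lambda>x. g + x) ` G0. \<pi> h (\<pi> gt I) \<in> A}" for A
    using translation_image_Collect[of gt g G0 "\<lambda>h. \<pi> h I \<in> A"]
    by (simp add: hom add.commute)
  then show ?thesis
    unfolding rho_def by (simp add: haar_prob_measure_translation[OF assms(1)])
qed

theorem theorem8:
  fixes \<mu> :: "('g::{topological_ab_group_add,t2_space}) measure"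
    and \<pi> :: "'g \<Rightarrow> real^'d \<Rightarrow> real^'d"
    and G0 :: "'g set"
  assumes "compact (UNIV :: 'g set)"
    and "haar_prob \<mu>"
    and "unitary_rep \<pi>"
    and "G0 \<in> sets \<mu>"
    and "measure \<mu> G0 > 0"
  shows "(\<forall>I I'. orbit_equiv \<pi> I I' \<longrightarrow> (\<exists>gt. Pbar \<mu> G0 \<pi> I' = act_map gt (Pbar \<mu> G0 \<pi> I)))
       \<and> (\<forall>I gt g. Pbar \<mu> G0 \<pi> (\<pi> gt I) g = Pbar \<mu> G0 \<pi> I (g + gt))"
proof -
  have hom: "\<And>g h. \<pi> (g + h) = \<pi> g \<circ> \<pi> h"
    using assms(3) unfolding unitary_rep_def by blast
  have covariant: "Pbar \<mu> G0 \<pi> (\<pi> gt I) g = Pbar \<mu> G0 \<pi> I (g + gt)" for I gt g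
    unfolding Pbar_def using rho_translate_point[OF assms(2) hom] .
  show ?thesis
  proof (intro conjI allI impI)
    fix I I' assume "orbit_equiv \<pi> I I'"
    then obtain gt where "\<pi> gt I = I'"
      unfolding orbit_equiv_def by blast
    then have "Pbar \<mu> G0 \<pi> I' = act_map gt (Pbar \<mu> G0 \<pi> I)"
      using covariant by (auto simp: act_map_def add.commute)
    then show "\<exists>gt. Pbar \<mu> G0 \<pi> I' = act_map gt (Pbar \<mu> G0 \<pi> I)" ..
  qed (rule covariant)
qed

end
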